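(* Let $\mathfrak L=L_{\boldsymbol m}(\mathfrak g,\boldsymbol\sigma,\mathfrak h)$ be a multiloop Lie algebra, and let $P\in GL_n(\mathbb Z)$ and $\tilde{\boldsymbol m}\in\mathbb Z^n_{>0}$ satisfy $(\boldsymbol\sigma^P)^{\tilde{\boldsymbol m}}=\mathbf{id}$. Then $\mathfrak g^{\boldsymbol\sigma}=\mathfrak g^{\boldsymbol\sigma^P}$, and there exists a group monomorphism $\rho:\langle\mathrm{supp}_{\mathbb Z^n}(\mathfrak L)\rangle\to\mathbb Z^n$ such that $\mathfrak L_{(\rho)}$ is $Q_{\mathfrak h}\times\mathbb Z^n$-graded-isomorphic to $L_{\tilde{\boldsymbol m}}(\mathfrak g,\boldsymbol\sigma^P,\mathfrak h)$.
   Context: $k$ is algebraically closed of characteristic $0$; fixed primitive roots of unity $\zeta_n$ with $\zeta_{mn}^m=\zeta_n$. Multiloop Lie algebra: $\mathfrak g$ finite-dimensional simple over $k$, $\boldsymbol\sigma=(\sigma_1,\dots,\sigma_n)$ pairwise commuting finite-order automorphisms, $\boldsymbol m\in\mathbb Z^n_{>0}$ with $\sigma_i^{m_i}=\mathrm{id}$; for $\lambda=(l_1,\dots,l_n)\in\mathbb Z^n$, $\mathfrak g^{\bar\lambda}=\{g:\sigma_i(g)=\zeta_{m_i}^{l_i}g\ \forall i\}$; $\mathfrak g^{\boldsymbol\sigma}=\mathfrak g^{\bar0}$. If $\mathfrak g^{\boldsymbol\sigma}\ne0$, $\mathfrak h$ is a Cartan subalgebra (maximal ad-diagonalizable subalgebra)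 of $\mathfrak g^{\boldsymbol\sigma}$, acting diagonalizably on $\mathfrak g$ with weight spaces $\mathfrak g_\alpha$, $Q_{\mathfrak h}$ is generated by the nonzero weights, and $L_{\boldsymbol m}(\mathfrak g,\boldsymbol\sigma,\mathfrak h)=\bigoplus_{(\alpha,\lambda)\in Q_{\mathfrak h}\times\mathbb Z^n}(\mathfrak g_\alpha\cap\mathfrak g^{\bar\lambda})\otimes t^\lambda\subseteq\mathfrak g\otimes k[t_1^{\pm1},\dots,t_n^{\pm1}]$; if $\mathfrak g^{\boldsymbol\sigma}=0$, $\mathfrak h=0$, $Q_{\mathfrak h}=\{0\}$ and $L_{\boldsymbol m}(\mathfrak g,\boldsymbol\sigma,\mathfrak h)=\bigoplus_\lambda\mathfrak g^{\bar\lambda}\otimes t^\lambda$. It is $Q_{\mathfrak h}\times\mathbb Z^n$-graded with components $\mathfrak L^\lambda_\alpha$; $\langle\mathrm{supp}_{\mathbb Z^n}(\mathfrak L)\rangle$ is the subgroup generated by $\{\lambda:\mathfrak L^\lambda\ne0\}$. For $P=(p_{ij})$, $\boldsymbol\sigma^P=(\prod_i\sigma_i^{p_{i1}},\dots,\prod_i\sigma_i^{p_{in}})$. For a monomorphism $\rho:\langle\mathrm{supp}_{\mathbb Z^n}(\mathfrak L)\rangle\to\mathbb Z^n$, $\mathfrak L_{(\rho)}$ is $\mathfrak L$ regraded by $(\mathfrak L_{(\rho)})^\lambda_\alpha=\mathfrak L^{\rho^{-1}(\lambda)}_\alpha$ for $\lambda\in\mathrm{Im}\,\rho$ and $0$ otherwise.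 $Q_{\mathfrak h}\times\mathbb Z^n$-graded-isomorphic means there is a Lie algebra isomorphism mapping each $(\alpha,\lambda)$-component onto the $(\alpha,\lambda)$-component. *)

theory Defs
  imports "HOL-Analysis.Analysis" "HOL-Computational_Algebra.Polynomial"
begin

definition alg_closed_field :: "'k::field itself \<Rightarrow> bool" where
  "alg_closed_field _ \<longleftrightarrow> (\<forall>p::'k poly. degree p > 0 \<longrightarrow> (\<exists>x. poly p x = 0))"

definition compatible_roots_of_unity :: "(nat \<Rightarrow> 'k::field) \<Rightarrow> bool" where
  "compatible_roots_of_unity \<zeta> \<longleftrightarrow>
     (\<forall>n>0. \<zeta> n ^ n = 1 \<and> (\<forall>j. 0 < j \<and> j < n \<longrightarrow> \<zeta> n ^ j \<noteq> 1)) \<and>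
     (\<forall>m n. 0 < m \<and> 0 < n \<longrightarrow> \<zeta> (m * n) ^ m = \<zeta> n)"

section \<open>Lie algebras (the whole type 'g, scalar multiplication sc, bracket br)\<close>

definition lie_algebra :: "('k::field \<Rightarrow> 'g::ab_group_add \<Rightarrow> 'g) \<Rightarrow> ('g \<Rightarrow> 'g \<Rightarrow> 'g) \<Rightarrow> bool" where
  "lie_algebra sc br \<longleftrightarrow> vector_space sc \<and>
     (\<forall>x. Vector_Spaces.linear sc sc (br x)) \<and> (\<forall>y. Vector_Spaces.linear sc sc (\<lambda>x. br x y)) \<and>
     (\<forall>x. br x x = 0) \<and>
     (\<forall>x y z. br x (br y z) + br y (br z x) + br z (br x y) = 0)"

definition fin_dim :: "('k::field \<Rightarrow> 'g::ab_group_add \<Rightarrow> 'g) \<Rightarrow> bool" where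
  "fin_dim sc \<longleftrightarrow> (\<exists>B. finite B \<and> module.span sc B = UNIV)"

definition lie_ideal :: "('k::field \<Rightarrow> 'g::ab_group_add \<Rightarrow> 'g) \<Rightarrow> ('g \<Rightarrow> 'g \<Rightarrow> 'g) \<Rightarrow> 'g set \<Rightarrow> bool" where
  "lie_ideal sc br I \<longleftrightarrow> module.subspace sc I \<and> (\<forall>x y. y \<in> I \<longrightarrow> br x y \<in> I)"

definition simple_lie :: "('k::field \<Rightarrow> 'g::ab_group_add \<Rightarrow> 'g) \<Rightarrow> ('g \<Rightarrow> 'g \<Rightarrow> 'g) \<Rightarrow> bool" where
  "simple_lie sc br \<longleftrightarrow> lie_algebra sc br \<and> fin_dim sc \<and> (\<exists>x y. br x y \<noteq> 0) \<and>
     (\<forall>I. lie_ideal sc br I \<longrightarrow> I = {0} \<or> I = UNIV)"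

definition lie_aut :: "('k::field \<Rightarrow> 'g::ab_group_add \<Rightarrow> 'g) \<Rightarrow> ('g \<Rightarrow> 'g \<Rightarrow> 'g) \<Rightarrow> ('g \<Rightarrow> 'g) \<Rightarrow> bool" where
  "lie_aut sc br f \<longleftrightarrow> bij f \<and> Vector_Spaces.linear sc sc f \<and> (\<forall>x y. f (br x y) = br (f x) (f y))"

section \<open>Automorphism tuples indexed by the finite type 'n (so n = CARD('n))\<close>

definition zpow_fun :: "('a \<Rightarrow> 'a) \<Rightarrow> int \<Rightarrow> 'a \<Rightarrow> 'a" where
  "zpow_fun f p = (if 0 \<le> p then f ^^ nat p else inv f ^^ nat (- p))"

definition sigmaP :: "('n::finite \<Rightarrow> 'g \<Rightarrow> 'g) \<Rightarrow> int^'n^'n \<Rightarrow> 'n \<Rightarrow> 'g \<Rightarrow> 'g" where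
  "sigmaP \<sigma> P j = Finite_Set.fold (\<lambda>i h. zpow_fun (\<sigma> i) (P $ i $ j) \<circ> h) id (UNIV :: 'n set)"

definition fixpts :: "('n \<Rightarrow> 'g \<Rightarrow> 'g) \<Rightarrow> 'g set" where
  "fixpts \<sigma> = {x. \<forall>i. \<sigma> i x = x}"

definition gbar :: "('k::field \<Rightarrow> 'g \<Rightarrow> 'g) \<Rightarrow> ('n::finite \<Rightarrow> 'g \<Rightarrow> 'g) \<Rightarrow> ('n \<Rightarrow> nat) \<Rightarrow> (nat \<Rightarrow> 'k)
    \<Rightarrow> int^'n \<Rightarrow> 'g set" where
  "gbar sc \<sigma> m \<zeta> lam = {x. \<forall>i. \<sigma> i x = sc (\<zeta> (m i) powi (lam $ i)) x}"

definition joint_eigvecs :: "('k::field \<Rightarrow> 'g::ab_group_add \<Rightarrow> 'g) \<Rightarrow> ('g \<Rightarrow> 'g \<Rightarrow> 'g) \<Rightarrow> 'g set \<Rightarrow> 'g set" where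
  "joint_eigvecs sc br H = {x. \<forall>h\<in>H. \<exists>c. br h x = sc c x}"

definition ad_diag_subalg :: "('k::field \<Rightarrow> 'g::ab_group_add \<Rightarrow> 'g) \<Rightarrow> ('g \<Rightarrow> 'g \<Rightarrow> 'g) \<Rightarrow> 'g set \<Rightarrow> 'g set \<Rightarrow> bool" where
  "ad_diag_subalg sc br S H \<longleftrightarrow> module.subspace sc H \<and> H \<subseteq> S \<and> (\<forall>x\<in>H. \<forall>y\<in>H. br x y \<in> H) \<and>
     module.span sc (joint_eigvecs sc br H) = UNIV"

definition cartan_subalg :: "('k::field \<Rightarrow> 'g::ab_group_add \<Rightarrow> 'g) \<Rightarrow> ('g \<Rightarrow> 'g \<Rightarrow> 'g) \<Rightarrow> 'g set \<Rightarrow> 'g set \<Rightarrow> bool" where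
  "cartan_subalg sc br S H \<longleftrightarrow> ad_diag_subalg sc br S H \<and>
     (\<forall>H'. ad_diag_subalg sc br S H' \<and> H \<subseteq> H' \<longrightarrow> H' = H)"

text \<open>Functionals on H are represented as functions 'g => 'k vanishing off H.\<close>
definition wspace :: "('k::field \<Rightarrow> 'g::ab_group_add \<Rightarrow> 'g) \<Rightarrow> ('g \<Rightarrow> 'g \<Rightarrow> 'g) \<Rightarrow> 'g set \<Rightarrow> ('g \<Rightarrow> 'k) \<Rightarrow> 'g set" where
  "wspace sc br H \<alpha> = {x. \<forall>h\<in>H. br h x = sc (\<alpha> h) x}"

definition is_weight :: "('k::field \<Rightarrow> 'g::ab_group_add \<Rightarrow> 'g) \<Rightarrow> ('g \<Rightarrow> 'g \<Rightarrow> 'g) \<Rightarrow> 'g set \<Rightarrow> ('g \<Rightarrow> 'k) \<Rightarrow> bool" where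
  "is_weight sc br H \<alpha> \<longleftrightarrow>
     (\<forall>h\<in>H. \<forall>h'\<in>H. \<alpha> (h + h') = \<alpha> h + \<alpha> h') \<and> (\<forall>c. \<forall>h\<in>H. \<alpha> (sc c h) = c * \<alpha> h) \<and>
     (\<forall>x. x \<notin> H \<longrightarrow> \<alpha> x = 0) \<and> wspace sc br H \<alpha> \<noteq> {0}"

inductive_set Qroot :: "('k::field \<Rightarrow> 'g::ab_group_add \<Rightarrow> 'g) \<Rightarrow> ('g \<Rightarrow> 'g \<Rightarrow> 'g) \<Rightarrow> 'g set \<Rightarrow> ('g \<Rightarrow> 'k) set"
  for sc br H where
  Q_zero: "(\<lambda>_. 0) \<in> Qroot sc br H"
| Q_gen: "is_weight sc br H \<alpha> \<Longrightarrow> \<alpha> \<noteq> (\<lambda>_. 0) \<Longrightarrow> \<alpha> \<in> Qroot sc br H"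
| Q_add: "\<alpha> \<in> Qroot sc br H \<Longrightarrow> \<beta> \<in> Qroot sc br H \<Longrightarrow> (\<lambda>x. \<alpha> x + \<beta> x) \<in> Qroot sc br H"
| Q_neg: "\<alpha> \<in> Qroot sc br H \<Longrightarrow> (\<lambda>x. - \<alpha> x) \<in> Qroot sc br H"

section \<open>g \<otimes> k[t_1^{+-1},...,t_n^{+-1}] as finitely supported maps Z^n => g\<close>

definition lsc :: "('k \<Rightarrow> 'g \<Rightarrow> 'g) \<Rightarrow> 'k \<Rightarrow> ('a \<Rightarrow> 'g) \<Rightarrow> 'a \<Rightarrow> 'g" where
  "lsc sc c f = (\<lambda>\<mu>. sc c (f \<mu>))"

definition ladd :: "('a \<Rightarrow> 'g::ab_group_add) \<Rightarrow> ('a \<Rightarrow> 'g) \<Rightarrow> 'a \<Rightarrow> 'g" where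
  "ladd f g = (\<lambda>\<mu>. f \<mu> + g \<mu>)"

text \<open>[x t^lam, y t^mu] = [x,y] t^(lam+mu), extended bilinearly.\<close>
definition lbr :: "('g::ab_group_add \<Rightarrow> 'g \<Rightarrow> 'g) \<Rightarrow> ('a::ab_group_add \<Rightarrow> 'g) \<Rightarrow> ('a \<Rightarrow> 'g) \<Rightarrow> 'a \<Rightarrow> 'g" where
  "lbr br f g = (\<lambda>\<nu>. \<Sum>lam\<in>{lam. f lam \<noteq> 0}. br (f lam) (g (\<nu> - lam)))"

definition mlcomp :: "('k::field \<Rightarrow> 'g::ab_group_add \<Rightarrow> 'g) \<Rightarrow> ('g \<Rightarrow> 'g \<Rightarrow> 'g) \<Rightarrow> ('n::finite \<Rightarrow> 'g \<Rightarrow> 'g)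
    \<Rightarrow> ('n \<Rightarrow> nat) \<Rightarrow> (nat \<Rightarrow> 'k) \<Rightarrow> 'g set \<Rightarrow> ('g \<Rightarrow> 'k) \<Rightarrow> int^'n \<Rightarrow> (int^'n \<Rightarrow> 'g) set" where
  "mlcomp sc br \<sigma> m \<zeta> H \<alpha> lam =
     {f. (\<forall>\<mu>. \<mu> \<noteq> lam \<longrightarrow> f \<mu> = 0) \<and> f lam \<in> wspace sc br H \<alpha> \<inter> gbar sc \<sigma> m \<zeta> lam}"

definition multiloop :: "('k::field \<Rightarrow> 'g::ab_group_add \<Rightarrow> 'g) \<Rightarrow> ('g \<Rightarrow> 'g \<Rightarrow> 'g) \<Rightarrow> ('n::finite \<Rightarrow> 'g \<Rightarrow> 'g)
    \<Rightarrow> ('n \<Rightarrow> nat) \<Rightarrow> (nat \<Rightarrow> 'k) \<Rightarrow> 'g set \<Rightarrow> (int^'n \<Rightarrow> 'g) set" where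
  "multiloop sc br \<sigma> m \<zeta> H =
     {f. finite {\<mu>. f \<mu> \<noteq> 0} \<and>
         (\<forall>\<mu>. f \<mu> \<in> module.span sc (\<Union>\<alpha>\<in>Qroot sc br H. wspace sc br H \<alpha> \<inter> gbar sc \<sigma> m \<zeta> \<mu>))}"

definition supp_Zn :: "(int^'n \<Rightarrow> 'g::zero) set \<Rightarrow> (int^'n) set" where
  "supp_Zn L = {lam. \<exists>f\<in>L. f lam \<noteq> 0}"

inductive_set zgen :: "'a::ab_group_add set \<Rightarrow> 'a set" for S where
  zg_zero: "0 \<in> zgen S"
| zg_gen: "x \<in> S \<Longrightarrow> x \<in> zgen S"
| zg_add: "x \<in> zgen S \<Longrightarrow> y \<in> zgen S \<Longrightarrow> x + y \<in> zgen S"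
| zg_neg: "x \<in> zgen S \<Longrightarrow> - x \<in> zgen S"

definition group_mono_on :: "'a::ab_group_add set \<Rightarrow> ('a \<Rightarrow> 'b::ab_group_add) \<Rightarrow> bool" where
  "group_mono_on G \<rho> \<longleftrightarrow> (\<forall>a\<in>G. \<forall>b\<in>G. \<rho> (a + b) = \<rho> a + \<rho> b) \<and> inj_on \<rho> G"

definition regraded_comp :: "(int^'n \<Rightarrow> (int^'n \<Rightarrow> 'g::zero) set) \<Rightarrow> (int^'n) set \<Rightarrow> (int^'n \<Rightarrow> int^'n)
    \<Rightarrow> int^'n \<Rightarrow> (int^'n \<Rightarrow> 'g) set" where
  "regraded_comp C G \<rho> lam = (if lam \<in> \<rho> ` G then C (the_inv_into G \<rho> lam) else {\<lambda>_. 0})"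

definition lie_iso_between :: "('k \<Rightarrow> 'g::ab_group_add \<Rightarrow> 'g) \<Rightarrow> ('g \<Rightarrow> 'g \<Rightarrow> 'g)
    \<Rightarrow> ('a::ab_group_add \<Rightarrow> 'g) set \<Rightarrow> ('a \<Rightarrow> 'g) set \<Rightarrow> (('a \<Rightarrow> 'g) \<Rightarrow> ('a \<Rightarrow> 'g)) \<Rightarrow> bool" where
  "lie_iso_between sc br L1 L2 \<phi> \<longleftrightarrow> bij_betw \<phi> L1 L2 \<and>
     (\<forall>f\<in>L1. \<forall>g\<in>L1. \<phi> (ladd f g) = ladd (\<phi> f) (\<phi> g)) \<and>
     (\<forall>c. \<forall>f\<in>L1. \<phi> (lsc sc c f) = lsc sc c (\<phi> f)) \<and>
     (\<forall>f\<in>L1. \<forall>g\<in>L1. \<phi> (lbr br f g) = lbr br (\<phi> f) (\<phi> g))"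

end

theory Submission
  imports Defs
begin

text \<open>Fix a common multiple \<open>K\<close> of all the orders and put \<open>z = \<zeta> K\<close>. The
  component of degree \<open>\<lambda>\<close> for \<open>\<sigma>\<close> is the joint eigenspace on which \<open>\<sigma> i\<close> acts by
  \<open>z\<close> to the power \<open>a i = (K div m i) * \<lambda> i\<close>. Since the j-th entry of \<open>\<sigma>\<^sup>P\<close> is the
  product of the \<open>\<sigma> i ^ P i j\<close>, a joint eigenvector of \<open>\<sigma>\<close> with exponent vector \<open>a\<close>
  is one of \<open>\<sigma>\<^sup>P\<close> with exponent vector \<open>a P\<close>, and conversely, because \<open>\<sigma>\<close> is
  recovered from \<open>\<sigma>\<^sup>P\<close> through \<open>P\<^sup>-\<^sup>1\<close>; in particular the fixed points agree.
  As \<open>\<sigma>\<^sup>P\<close> has periods \<open>mt\<close>, every \<open>\<lambda>\<close> carrying a nonzero vector has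
  \<open>(a P) j\<close> divisible by \<open>K div mt j\<close>, so \<open>\<rho> \<lambda> = (mt j * (a P) j div K)\<^sub>j\<close> is an
  additive injection on the group generated by the support, and it carries the degree
  \<open>\<lambda>\<close> component for \<open>\<sigma>\<close> to the degree \<open>\<rho> \<lambda>\<close> component for \<open>\<sigma>\<^sup>P\<close>.
  Transporting functions along \<open>\<rho>\<close> is therefore bijective, preserves the bracket
  because \<open>\<rho>\<close> is additive, and matches the \<open>(\<alpha>, \<lambda>)\<close>-components.\<close>

section \<open>Integer powers and products of commuting bijections\<close>

lemma zpow_fun_succ:
  assumes "bij f" shows "zpow_fun f (k + 1) = f \<circ> zpow_fun f k"
proof (cases "k \<ge> 0")
  case True
  then have "nat (k + 1) = Suc (nat k)" by simp
  with True show ?thesis by (simp add: zpow_fun_def)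
next
  case False
  then have "nat (- k) = Suc (nat (- (k + 1)))" by simp
  moreover have "f \<circ> inv f = id" using assms by (simp add: bij_is_surj flip: surj_iff)
  ultimately show ?thesis using False
    by (cases "k = -1") (simp_all add: zpow_fun_def o_assoc)
qed

lemma zpow_fun_pred:
  assumes "bij f" shows "zpow_fun f (k - 1) = inv f \<circ> zpow_fun f k"
proof -
  have "zpow_fun f k = f \<circ> zpow_fun f (k - 1)"
    using zpow_fun_succ[OF assms, of "k - 1"] by simp
  then show ?thesis using assms by (simp add: o_assoc bij_is_inj)
qed

lemma zpow_fun_add:
  assumes "bij f" shows "zpow_fun f (a + b) = zpow_fun f a \<circ> zpow_fun f b"
proof (induction a rule: int_induct[where k = 0])
  case base
  then show ?case by (simp add: zpow_fun_def)
next
  case (step1 i)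
  have "zpow_fun f (i + 1 + b) = f \<circ> zpow_fun f (i + b)"
    using zpow_fun_succ[OF assms, of "i + b"] by (simp add: ac_simps)
  then show ?case using step1 zpow_fun_succ[OF assms, of i] by (simp add: o_assoc)
next
  case (step2 i)
  have "zpow_fun f (i - 1 + b) = inv f \<circ> zpow_fun f (i + b)"
    using zpow_fun_pred[OF assms, of "i + b"] by (simp add: algebra_simps)
  then show ?case using step2 zpow_fun_pred[OF assms, of i] by (simp add: o_assoc)
qed

lemma inv_comp_commute:
  assumes "bij f" "f \<circ> h = h \<circ> f" shows "inv f \<circ> h = h \<circ> inv f"
proof
  fix x
  have "h x = f (h (inv f x))"
    using fun_cong[OF assms(2), of "inv f x"] assms(1) by (simp add: bij_is_surj surj_f_inv_f)
  then show "(inv f \<circ> h) x = (h \<circ> inv f) x" using assms(1) by (simp add: bij_is_inj)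
qed

lemma zpow_fun_comp_commute:
  assumes "bij f" "f \<circ> h = h \<circ> f" shows "zpow_fun f k \<circ> h = h \<circ> zpow_fun f k"
proof (induction k rule: int_induct[where k = 0])
  case base
  then show ?case by (simp add: zpow_fun_def)
next
  case (step1 i)
  then show ?case using zpow_fun_succ[OF assms(1), of i] assms(2)
    by (simp add: fun_eq_iff)
next
  case (step2 i)
  then show ?case using zpow_fun_pred[OF assms(1), of i] inv_comp_commute[OF assms]
    by (simp add: fun_eq_iff)
qed

definition comp_fold :: "('i \<Rightarrow> 'a \<Rightarrow> 'a) \<Rightarrow> 'i set \<Rightarrow> 'a \<Rightarrow> 'a" where
  "comp_fold A F = Finite_Set.fold (\<lambda>i h. A i \<circ> h) id F"

lemma comp_fold_empty [simp]: "comp_fold A {} = id"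
  by (simp add: comp_fold_def)

lemma comp_fold_insert:
  assumes "\<And>i j. i \<in> insert a F \<Longrightarrow> j \<in> insert a F \<Longrightarrow> A i \<circ> A j = A j \<circ> A i"
    and "finite F" "a \<notin> F"
  shows "comp_fold A (insert a F) = A a \<circ> comp_fold A F"
proof -
  interpret comp_fun_commute_on "insert a F" "\<lambda>i h. A i \<circ> h"
    by unfold_locales (use assms(1) in \<open>simp add: fun_eq_iff\<close>)
  show ?thesis unfolding comp_fold_def by (rule fold_insert) (use assms in auto)
qed

lemma comp_fold_id:
  assumes "finite F" "\<And>i. i \<in> F \<Longrightarrow> A i = id" shows "comp_fold A F = id"
  using assms
proof (induction F rule: finite_induct)
  case (insert a F)
  then show ?case by (subst comp_fold_insert) auto
qed simp

lemma comp_fold_comp_commute: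
  assumes "\<And>i j. A i \<circ> A j = A j \<circ> A i" "\<And>i. C \<circ> A i = A i \<circ> C" "finite F"
  shows "C \<circ> comp_fold A F = comp_fold A F \<circ> C"
  using assms(3)
proof (induction F rule: finite_induct)
  case (insert a F)
  have "comp_fold A (insert a F) = A a \<circ> comp_fold A F"
    using insert assms(1) by (intro comp_fold_insert) auto
  moreover have "C \<circ> (A a \<circ> comp_fold A F) = (A a \<circ> comp_fold A F) \<circ> C"
    using insert.IH assms(2)[of a] by (simp add: fun_eq_iff)
  ultimately show ?case by (simp only:)
qed simp

lemma comp_fold_comp:
  assumes "\<And>i j. A i \<circ> A j = A j \<circ> A i" "\<And>i j. B i \<circ> B j = B j \<circ> B i"
    and "\<And>i j. A i \<circ> B j = B j \<circ> A i" "finite F"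
  shows "comp_fold (\<lambda>i. A i \<circ> B i) F = comp_fold A F \<circ> comp_fold B F"
  using assms(4)
proof (induction F rule: finite_induct)
  case (insert a F)
  have AB: "(A i \<circ> B i) \<circ> (A j \<circ> B j) = (A j \<circ> B j) \<circ> (A i \<circ> B i)" for i j
    using assms(1,2)[of i j] assms(3)[of i j] assms(3)[of j i] by (simp add: fun_eq_iff) metis
  have "B a \<circ> comp_fold A F = comp_fold A F \<circ> B a"
    using comp_fold_comp_commute[of A "B a" F] assms(1,3) insert(1) by metis
  then have "(A a \<circ> B a) \<circ> (comp_fold A F \<circ> comp_fold B F)
      = (A a \<circ> comp_fold A F) \<circ> (B a \<circ> comp_fold B F)"
    by (simp add: fun_eq_iff)
  moreover have "comp_fold (\<lambda>i. A i \<circ> B i) (insert a F) = (A a \<circ> B a) \<circ> comp_fold (\<lambda>i. A i \<circ> B i) F"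
    using insert AB by (intro comp_fold_insert) auto
  moreover have "comp_fold A (insert a F) = A a \<circ> comp_fold A F"
    using insert assms(1) by (intro comp_fold_insert) auto
  moreover have "comp_fold B (insert a F) = B a \<circ> comp_fold B F"
    using insert assms(2) by (intro comp_fold_insert) auto
  ultimately show ?case using insert.IH by (simp only:)
qed simp

definition commuting_bijections :: "('i \<Rightarrow> 'a \<Rightarrow> 'a) \<Rightarrow> bool" where
  "commuting_bijections \<tau> \<longleftrightarrow> (\<forall>i. bij (\<tau> i)) \<and> (\<forall>i j. \<tau> i \<circ> \<tau> j = \<tau> j \<circ> \<tau> i)"

lemma commuting_bijections_zpow_fun:
  assumes "commuting_bijections \<tau>"
  shows "zpow_fun (\<tau> i) a \<circ> zpow_fun (\<tau> j) b = zpow_fun (\<tau> j) b \<circ> zpow_fun (\<tau> i) a"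
proof -
  have "bij (\<tau> i)" "bij (\<tau> j)" "\<tau> i \<circ> \<tau> j = \<tau> j \<circ> \<tau> i"
    using assms by (auto simp: commuting_bijections_def)
  then have "\<tau> j \<circ> zpow_fun (\<tau> i) a = zpow_fun (\<tau> i) a \<circ> \<tau> j"
    using zpow_fun_comp_commute by metis
  then show ?thesis using zpow_fun_comp_commute[OF \<open>bij (\<tau> j)\<close>] by metis
qed

definition multipow :: "('n::finite \<Rightarrow> 'a \<Rightarrow> 'a) \<Rightarrow> int^'n \<Rightarrow> 'a \<Rightarrow> 'a" where
  "multipow \<tau> v = comp_fold (\<lambda>i. zpow_fun (\<tau> i) (v $ i)) UNIV"

lemma sigmaP_eq_multipow: "sigmaP \<sigma> P = (\<lambda>j. multipow \<sigma> (column j P))"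
  by (simp add: fun_eq_iff sigmaP_def multipow_def comp_fold_def column_def)

lemma multipow_zero: "multipow \<tau> 0 = id"
  unfolding multipow_def by (rule comp_fold_id) (simp_all add: zpow_fun_def)

lemma multipow_add:
  assumes "commuting_bijections \<tau>" shows "multipow \<tau> (u + v) = multipow \<tau> u \<circ> multipow \<tau> v"
proof -
  have "bij (\<tau> i)" for i using assms by (simp add: commuting_bijections_def)
  then have "zpow_fun (\<tau> i) ((u + v) $ i) = zpow_fun (\<tau> i) (u $ i) \<circ> zpow_fun (\<tau> i) (v $ i)" for i
    by (simp add: zpow_fun_add)
  then show ?thesis unfolding multipow_def
    by (simp add: comp_fold_comp commuting_bijections_zpow_fun[OF assms])
qed

lemma multipow_commute:
  assumes "commuting_bijections \<tau>" shows "multipow \<tau> u \<circ> multipow \<tau> v = multipow \<tau> v \<circ> multipow \<tau> u"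
  by (metis add.commute multipow_add[OF assms])

lemma multipow_uminus:
  assumes "commuting_bijections \<tau>" shows "multipow \<tau> (- v) \<circ> multipow \<tau> v = id"
  by (metis add.left_inverse multipow_add[OF assms] multipow_zero)

lemma commuting_bijections_multipow:
  assumes "commuting_bijections \<tau>" shows "commuting_bijections (\<lambda>j. multipow \<tau> (c j))"
  unfolding commuting_bijections_def
  using multipow_uminus[OF assms] multipow_commute[OF assms] o_bij by metis

lemma multipow_axis:
  assumes "commuting_bijections \<tau>" shows "multipow \<tau> (axis i 1) = \<tau> i"
proof -
  have "insert i (- {i}) = UNIV" by auto
  then have "multipow \<tau> (axis i 1) = comp_fold (\<lambda>j. zpow_fun (\<tau> j) (axis i 1 $ j)) (insert i (- {i}))"
    by (simp only: multipow_def)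
  also have "\<dots> = zpow_fun (\<tau> i) 1 \<circ> comp_fold (\<lambda>j. zpow_fun (\<tau> j) (axis i 1 $ j)) (- {i})"
    by (subst comp_fold_insert) (use commuting_bijections_zpow_fun[OF assms] in auto)
  also have "comp_fold (\<lambda>j. zpow_fun (\<tau> j) (axis i 1 $ j)) (- {i}) = id"
    by (rule comp_fold_id) (auto simp: axis_def zpow_fun_def)
  finally show ?thesis by (simp add: zpow_fun_def)
qed

lemma zpow_fun_multipow:
  assumes "commuting_bijections \<tau>" shows "zpow_fun (multipow \<tau> v) k = multipow \<tau> (k *s v)"
proof (induction k rule: int_induct[where k = 0])
  case base
  then show ?case by (simp add: zpow_fun_def multipow_zero)
next
  case (step1 i)
  have "bij (multipow \<tau> v)"
    using commuting_bijections_multipow[OF assms, of "\<lambda>_. v"] by (simp add: commuting_bijections_def)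
  then have "zpow_fun (multipow \<tau> v) (i + 1) = multipow \<tau> (v + i *s v)"
    using step1 zpow_fun_succ[of "multipow \<tau> v" i] multipow_add[OF assms, of v "i *s v"] by simp
  then show ?case by (simp add: algebra_simps)
next
  case (step2 i)
  have "inv (multipow \<tau> v) = multipow \<tau> (- v)"
    using multipow_uminus[OF assms] multipow_commute[OF assms] inv_unique_comp by metis
  moreover have "bij (multipow \<tau> v)"
    using commuting_bijections_multipow[OF assms, of "\<lambda>_. v"] by (simp add: commuting_bijections_def)
  ultimately have "zpow_fun (multipow \<tau> v) (i - 1) = multipow \<tau> (- v + i *s v)"
    using step2 zpow_fun_pred[of "multipow \<tau> v" i] multipow_add[OF assms, of "- v" "i *s v"] by simp
  then show ?case by (simp add: algebra_simps)
qed

lemma comp_fold_multipow: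
  assumes "commuting_bijections \<tau>" "finite F"
  shows "comp_fold (\<lambda>j. multipow \<tau> (c j)) F = multipow \<tau> (sum c F)"
  using assms(2)
proof (induction F rule: finite_induct)
  case empty
  then show ?case by (simp add: multipow_zero)
next
  case (insert a F)
  then show ?case using multipow_commute[OF assms(1)] multipow_add[OF assms(1)]
    by (subst comp_fold_insert) auto
qed

lemma multipow_multipow:
  assumes "commuting_bijections \<tau>"
  shows "multipow (\<lambda>j. multipow \<tau> (c j)) w = multipow \<tau> (\<Sum>j\<in>UNIV. w $ j *s c j)"
  unfolding multipow_def[of "\<lambda>j. multipow \<tau> (c j)"] zpow_fun_multipow[OF assms]
  using comp_fold_multipow[OF assms, of UNIV "\<lambda>j. w $ j *s c j"] by simp

section \<open>Joint eigenvectors and roots of unity\<close>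

definition commutes_scale :: "('k \<Rightarrow> 'g \<Rightarrow> 'g) \<Rightarrow> ('g \<Rightarrow> 'g) \<Rightarrow> bool" where
  "commutes_scale sc f \<longleftrightarrow> (\<forall>c x. f (sc c x) = sc c (f x))"

lemma commutes_scale_inv:
  assumes "bij f" "commutes_scale sc f" shows "commutes_scale sc (inv f)"
  unfolding commutes_scale_def
proof (intro allI)
  fix c x
  have "f (sc c (inv f x)) = sc c x"
    using assms by (simp add: commutes_scale_def bij_is_surj surj_f_inv_f)
  then show "inv f (sc c x) = sc c (inv f x)" using assms(1) by (metis bij_inv_eq_iff)
qed

lemma commutes_scale_funpow: "commutes_scale sc f \<Longrightarrow> commutes_scale sc (f ^^ n)"
  by (induction n) (simp_all add: commutes_scale_def)

lemma commutes_scale_zpow_fun: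
  assumes "bij f" "commutes_scale sc f" shows "commutes_scale sc (zpow_fun f k)"
  using commutes_scale_funpow[OF assms(2)] commutes_scale_funpow[OF commutes_scale_inv[OF assms]]
  by (simp add: zpow_fun_def)

lemma commutes_scale_comp_fold:
  assumes "\<And>i j. A i \<circ> A j = A j \<circ> A i" "\<And>i. commutes_scale sc (A i)" "finite F"
  shows "commutes_scale sc (comp_fold A F)"
  using assms(3)
proof (induction F rule: finite_induct)
  case empty
  then show ?case by (simp add: commutes_scale_def)
next
  case (insert a F)
  then show ?case using assms(1) assms(2)[of a] by (subst comp_fold_insert) (auto simp: commutes_scale_def)
qed

lemma commutes_scale_multipow:
  assumes "commuting_bijections \<tau>" "\<And>i. commutes_scale sc (\<tau> i)"
  shows "commutes_scale sc (multipow \<tau> v)"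
  unfolding multipow_def
  using assms commuting_bijections_zpow_fun[OF assms(1)]
  by (intro commutes_scale_comp_fold commutes_scale_zpow_fun) (simp_all add: commuting_bijections_def)

definition joint_eigvec ::
    "('k::field \<Rightarrow> 'g \<Rightarrow> 'g) \<Rightarrow> 'k \<Rightarrow> ('n \<Rightarrow> 'g \<Rightarrow> 'g) \<Rightarrow> int^'n \<Rightarrow> 'g \<Rightarrow> bool" where "joint_eigvec sc z \<tau> e x \<longleftrightarrow> (\<forall>i. \<tau> i x = sc (z powi (e $ i)) x)"

lemma prod_power_int_sum:
  assumes "(z::'a::field) \<noteq> 0" shows "(\<Prod>i\<in>F. z powi f i) = z powi (\<Sum>i\<in>F. f i)"
  by (induction F rule: infinite_finite_induct) (simp_all add: power_int_add assms)

context vector_space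
begin

lemma funpow_eigvec:
  assumes "commutes_scale scale f" "f x = scale c x" shows "(f ^^ n) x = scale (c ^ n) x"
  by (induction n) (use assms in \<open>simp_all add: commutes_scale_def mult.commute\<close>)

lemma inv_eigvec:
  assumes "bij f" "commutes_scale scale f" "f x = scale c x" "c \<noteq> 0"
  shows "inv f x = scale (inverse c) x"
proof -
  have "f (scale (inverse c) x) = x" using assms(2-4) by (simp add: commutes_scale_def)
  then show ?thesis using assms(1) by (metis bij_inv_eq_iff)
qed

lemma zpow_fun_eigvec:
  assumes "bij f" "commutes_scale scale f" "f x = scale c x" "c \<noteq> 0"
  shows "zpow_fun f k x = scale (c powi k) x"
  using funpow_eigvec[OF assms(2,3)] funpow_eigvec[OF commutes_scale_inv[OF assms(1,2)] inv_eigvec[OF assms]]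
  by (simp add: zpow_fun_def power_int_def)

lemma comp_fold_eigvec:
  assumes "\<And>i j. A i \<circ> A j = A j \<circ> A i" "\<And>i. commutes_scale scale (A i)"
    and "\<And>i. A i x = scale (c i) x" "finite F"
  shows "comp_fold A F x = scale (prod c F) x"
  using assms(4)
proof (induction F rule: finite_induct)
  case (insert a F)
  have "comp_fold A (insert a F) = A a \<circ> comp_fold A F"
    using insert assms(1) by (intro comp_fold_insert) auto
  then show ?case using insert assms(2,3) by (simp add: commutes_scale_def mult.commute)
qed simp

lemma joint_eigvec_multipow:
  assumes "commuting_bijections \<tau>" "\<And>i. commutes_scale scale (\<tau> i)"
    and "joint_eigvec scale z \<tau> e x" "z \<noteq> 0"
  shows "multipow \<tau> v x = scale (z powi (\<Sum>i\<in>UNIV. e $ i * v $ i)) x"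
proof -
  have "zpow_fun (\<tau> i) (v $ i) x = scale (z powi (e $ i * v $ i)) x" for i
    using assms by (simp add: zpow_fun_eigvec commuting_bijections_def joint_eigvec_def power_int_mult)
  then have "multipow \<tau> v x = scale (\<Prod>i\<in>UNIV. z powi (e $ i * v $ i)) x"
    unfolding multipow_def using assms(1,2)
    by (intro comp_fold_eigvec commutes_scale_zpow_fun commuting_bijections_zpow_fun)
      (simp_all add: commuting_bijections_def)
  then show ?thesis by (simp add: prod_power_int_sum assms(4))
qed

lemma joint_eigvec_period:
  assumes "joint_eigvec scale z \<tau> e x" "x \<noteq> 0" "commutes_scale scale (\<tau> i)" "\<tau> i ^^ n = id"
  shows "z powi (e $ i * int n) = 1"
proof -
  have "scale ((z powi e $ i) ^ n) x = scale 1 x"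
    using funpow_eigvec[OF assms(3), of x "z powi e $ i" n] assms(1,4) by (simp add: joint_eigvec_def)
  then have "(z powi e $ i) ^ n = 1" using assms(2) by (metis scale_cancel_right scale_one)
  then show ?thesis by (simp add: power_int_mult)
qed

end

lemma compatible_root_dvd:
  assumes "compatible_roots_of_unity \<zeta>" "0 < n" "n dvd K" "0 < K"
  shows "\<zeta> n = \<zeta> K ^ (K div n)"
proof -
  have "0 < K div n" using assms(2-4) by (simp add: div_greater_zero_iff dvd_imp_le)
  then show ?thesis using assms(1,2) unfolding compatible_roots_of_unity_def
    by (metis assms(3) dvd_div_mult_self)
qed

lemma compatible_root_powi:
  assumes "compatible_roots_of_unity \<zeta>" "0 < n" "n dvd K" "0 < K"
  shows "(\<zeta> n :: 'k::field) powi l = \<zeta> K powi (int (K div n) * l)"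
  using compatible_root_dvd[OF assms] by (simp add: power_int_mult)

lemma compatible_root_nonzero:
  assumes "compatible_roots_of_unity \<zeta>" "0 < K" shows "(\<zeta> K :: 'k::field) \<noteq> 0"
  using assms unfolding compatible_roots_of_unity_def by (metis power_0_left zero_neq_one not_gr0)

lemma compatible_root_powi_eq_1_iff:
  assumes "compatible_roots_of_unity \<zeta>" "0 < K"
  shows "(\<zeta> K :: 'k::field) powi a = 1 \<longleftrightarrow> int K dvd a"
proof -
  have root: "\<zeta> K ^ K = 1" and primitive: "\<And>j. 0 < j \<Longrightarrow> j < K \<Longrightarrow> \<zeta> K ^ j \<noteq> 1"
    using assms unfolding compatible_roots_of_unity_def by blast+
  have "\<zeta> K \<noteq> 0" by (rule compatible_root_nonzero[OF assms])
  define r where "r = nat (a mod int K)"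
  have "r < K" using assms(2) by (simp add: r_def nat_less_iff)
  have "\<zeta> K powi a = \<zeta> K powi (int K * (a div int K) + int r)"
    using assms(2) by (simp add: r_def)
  also have "\<dots> = \<zeta> K powi (int K * (a div int K)) * \<zeta> K powi int r"
    by (rule power_int_add) (simp add: \<open>\<zeta> K \<noteq> 0\<close>)
  also have "\<dots> = \<zeta> K ^ r" by (simp add: power_int_mult root)
  finally have "\<zeta> K powi a = 1 \<longleftrightarrow> r = 0" using primitive[of r] \<open>r < K\<close> by auto
  moreover have "0 \<le> a mod int K" using assms(2) by simp
  ultimately show ?thesis by (simp add: r_def dvd_eq_mod_eq_0)
qed

lemma cofactor_mult:
  assumes "n dvd K" shows "int n * (int (K div n) * l) = int K * l"
  using assms by (metis dvd_mult_div_cancel mult.assoc of_nat_mult)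

lemma cofactor_mult_div:
  assumes "0 < n" "n dvd K" "int K dvd int n * t"
  shows "int (K div n) * (int n * t div int K) = t"
proof (cases "K = 0")
  case True
  then show ?thesis using assms by simp
next
  case False
  obtain q where q: "int n * t = int K * q" using assms(3) by (auto simp: dvd_def)
  have "int n * (int (K div n) * q) = int n * t" using q cofactor_mult[OF assms(2)] by simp
  moreover have "int n * t div int K = q" using q False by simp
  ultimately show ?thesis using assms(1) by simp
qed

section \<open>Regrading along a monomorphism\<close>

lemma zgen_subset:
  assumes "S \<subseteq> A" "0 \<in> A"
    and "\<And>a b. a \<in> A \<Longrightarrow> b \<in> A \<Longrightarrow> a + b \<in> A" "\<And>a. a \<in> A \<Longrightarrow> - a \<in> A"
  shows "zgen S \<subseteq> A"
proof
  fix x assume "x \<in> zgen S"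
  then show "x \<in> A" by induction (use assms in auto)
qed

lemma zgen_diff: "a \<in> zgen S \<Longrightarrow> b \<in> zgen S \<Longrightarrow> a - b \<in> zgen S"
  using zgen.zg_add[OF _ zgen.zg_neg, of a S b] by simp

locale regrading =
  fixes G :: "'a::ab_group_add set" and \<rho> :: "'a \<Rightarrow> 'b::ab_group_add"
  assumes add_closed: "\<And>a b. a \<in> G \<Longrightarrow> b \<in> G \<Longrightarrow> a + b \<in> G"
    and diff_closed: "\<And>a b. a \<in> G \<Longrightarrow> b \<in> G \<Longrightarrow> a - b \<in> G"
    and hom_add: "\<And>a b. a \<in> G \<Longrightarrow> b \<in> G \<Longrightarrow> \<rho> (a + b) = \<rho> a + \<rho> b"
    and hom_inj: "inj_on \<rho> G"
begin

lemma hom_diff: "a \<in> G \<Longrightarrow> b \<in> G \<Longrightarrow> \<rho> (a - b) = \<rho> a - \<rho> b"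
  using hom_add[of "a - b" b] diff_closed by (simp add: eq_diff_eq)

definition regrade :: "('a \<Rightarrow> 'g::zero) \<Rightarrow> 'b \<Rightarrow> 'g" where
  "regrade f \<nu> = (if \<nu> \<in> \<rho> ` G then f (the_inv_into G \<rho> \<nu>) else 0)"

definition unregrade :: "('b \<Rightarrow> 'g::zero) \<Rightarrow> 'a \<Rightarrow> 'g" where
  "unregrade g \<mu> = (if \<mu> \<in> G then g (\<rho> \<mu>) else 0)"

lemma regrade_apply [simp]: "\<mu> \<in> G \<Longrightarrow> regrade f (\<rho> \<mu>) = f \<mu>"
  by (simp add: regrade_def the_inv_into_f_f[OF hom_inj])

lemma regrade_outside: "\<nu> \<notin> \<rho> ` G \<Longrightarrow> regrade f \<nu> = 0"
  by (simp add: regrade_def)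

lemma support_regrade:
  assumes "{\<mu>. f \<mu> \<noteq> 0} \<subseteq> G" shows "{\<nu>. regrade f \<nu> \<noteq> 0} = \<rho> ` {\<mu>. f \<mu> \<noteq> 0}"
proof
  show "{\<nu>. regrade f \<nu> \<noteq> 0} \<subseteq> \<rho> ` {\<mu>. f \<mu> \<noteq> 0}"
    using regrade_outside by fastforce
  show "\<rho> ` {\<mu>. f \<mu> \<noteq> 0} \<subseteq> {\<nu>. regrade f \<nu> \<noteq> 0}"
    using assms by auto
qed

lemma unregrade_regrade: "{\<mu>. f \<mu> \<noteq> 0} \<subseteq> G \<Longrightarrow> unregrade (regrade f) = f"
  by (force simp: fun_eq_iff unregrade_def)

lemma regrade_unregrade:
  assumes "{\<nu>. g \<nu> \<noteq> 0} \<subseteq> \<rho> ` G" shows "regrade (unregrade g) = g"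
proof
  fix \<nu>
  show "regrade (unregrade g) \<nu> = g \<nu>"
  proof (cases "\<nu> \<in> \<rho> ` G")
    case True
    then show ?thesis by (auto simp: unregrade_def)
  next
    case False
    then have "g \<nu> = 0" using assms by blast
    then show ?thesis using regrade_outside[OF False] by simp
  qed
qed

lemma finite_support_unregrade:
  assumes "finite {\<nu>. g \<nu> \<noteq> 0}" shows "finite {\<mu>. unregrade g \<mu> \<noteq> 0}"
proof (rule finite_imageD)
  show "finite (\<rho> ` {\<mu>. unregrade g \<mu> \<noteq> 0})"
    by (rule finite_subset[OF _ assms]) (auto simp: unregrade_def split: if_splits)
  show "inj_on \<rho> {\<mu>. unregrade g \<mu> \<noteq> 0}"
    by (rule inj_on_subset[OF hom_inj]) (auto simp: unregrade_def split: if_splits)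
qed

lemma regrade_ladd: "regrade (ladd f g) = ladd (regrade f) (regrade g)"
  by (simp add: fun_eq_iff regrade_def ladd_def)

lemma regrade_lsc: "sc c 0 = 0 \<Longrightarrow> regrade (lsc sc c f) = lsc sc c (regrade f)"
  by (simp add: fun_eq_iff regrade_def lsc_def)

lemma regrade_lbr:
  assumes br_zero: "\<And>x. br x 0 = 0" and supp: "{\<mu>. f \<mu> \<noteq> 0} \<subseteq> G"
  shows "regrade (lbr br f g) = lbr br (regrade f) (regrade g)"
proof
  fix \<nu>
  define F where "F = {\<mu>. f \<mu> \<noteq> 0}"
  have "lbr br (regrade f) (regrade g) \<nu> = (\<Sum>\<nu>'\<in>\<rho> ` F. br (regrade f \<nu>') (regrade g (\<nu> - \<nu>')))"
    using supp by (simp add: lbr_def support_regrade F_def)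
  also have "\<dots> = (\<Sum>\<mu>\<in>F. br (f \<mu>) (regrade g (\<nu> - \<rho> \<mu>)))"
    using supp inj_on_subset[OF hom_inj supp] by (simp add: sum.reindex F_def subset_iff)
  finally have rhs: "lbr br (regrade f) (regrade g) \<nu> = (\<Sum>\<mu>\<in>F. br (f \<mu>) (regrade g (\<nu> - \<rho> \<mu>)))" .
  show "regrade (lbr br f g) \<nu> = lbr br (regrade f) (regrade g) \<nu>"
  proof (cases "\<nu> \<in> \<rho> ` G")
    case True
    then obtain \<kappa> where \<kappa>: "\<kappa> \<in> G" "\<nu> = \<rho> \<kappa>" by blast
    have "regrade g (\<nu> - \<rho> \<mu>) = g (\<kappa> - \<mu>)" if "\<mu> \<in> F" for \<mu>
    proof -
      have "\<mu> \<in> G" using that supp by (auto simp: F_def)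
      then have "\<nu> - \<rho> \<mu> = \<rho> (\<kappa> - \<mu>)" using \<kappa> hom_diff by simp
      then show ?thesis using diff_closed \<open>\<mu> \<in> G\<close> \<kappa>(1) by simp
    qed
    then show ?thesis using rhs \<kappa> by (simp add: lbr_def F_def)
  next
    case False
    have "regrade g (\<nu> - \<rho> \<mu>) = 0" if "\<mu> \<in> F" for \<mu>
    proof (rule regrade_outside, rule notI)
      assume "\<nu> - \<rho> \<mu> \<in> \<rho> ` G"
      then obtain \<kappa> where "\<kappa> \<in> G" "\<nu> - \<rho> \<mu> = \<rho> \<kappa>" by blast
      moreover have "\<mu> \<in> G" using that supp by (auto simp: F_def)
      ultimately have "\<nu> = \<rho> (\<kappa> + \<mu>)" "\<kappa> + \<mu> \<in> G"
        using hom_add add_closed by (auto simp: algebra_simps)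
      then show False using False by blast
    qed
    then show ?thesis using rhs False regrade_outside br_zero by simp
  qed
qed

lemma regrade_image_single:
  assumes "\<mu> \<in> G"
  shows "regrade ` {f. (\<forall>\<nu>. \<nu> \<noteq> \<mu> \<longrightarrow> f \<nu> = 0) \<and> f \<mu> \<in> A}
    = {g. (\<forall>\<nu>. \<nu> \<noteq> \<rho> \<mu> \<longrightarrow> g \<nu> = 0) \<and> g (\<rho> \<mu>) \<in> A}"
proof (intro equalityI subsetI)
  fix h assume "h \<in> regrade ` {f. (\<forall>\<nu>. \<nu> \<noteq> \<mu> \<longrightarrow> f \<nu> = 0) \<and> f \<mu> \<in> A}"
  then obtain f where f: "\<forall>\<nu>. \<nu> \<noteq> \<mu> \<longrightarrow> f \<nu> = 0" "f \<mu> \<in> A" "h = regrade f" by blast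
  then have support: "{\<nu>. f \<nu> \<noteq> 0} \<subseteq> {\<mu>}" by blast
  have "{\<nu>. h \<nu> \<noteq> 0} = \<rho> ` {\<nu>. f \<nu> \<noteq> 0}"
    unfolding f(3) by (rule support_regrade) (use support assms in blast)
  also have "\<dots> \<subseteq> {\<rho> \<mu>}" using support by blast
  finally have "\<forall>\<nu>. \<nu> \<noteq> \<rho> \<mu> \<longrightarrow> h \<nu> = 0" by blast
  moreover have "h (\<rho> \<mu>) \<in> A" using f assms by simp
  ultimately show "h \<in> {g. (\<forall>\<nu>. \<nu> \<noteq> \<rho> \<mu> \<longrightarrow> g \<nu> = 0) \<and> g (\<rho> \<mu>) \<in> A}" by simp
next
  fix g assume g: "g \<in> {g. (\<forall>\<nu>. \<nu> \<noteq> \<rho> \<mu> \<longrightarrow> g \<nu> = 0) \<and> g (\<rho> \<mu>) \<in> A}"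
  have "unregrade g \<nu> = 0" if "\<nu> \<noteq> \<mu>" for \<nu>
  proof (cases "\<nu> \<in> G")
    case True
    then have "\<rho> \<nu> \<noteq> \<rho> \<mu>" using that assms inj_onD[OF hom_inj] by blast
    then show ?thesis using g True by (simp add: unregrade_def)
  qed (simp add: unregrade_def)
  moreover have "unregrade g \<mu> \<in> A" using g assms by (simp add: unregrade_def)
  moreover have "regrade (unregrade g) = g"
    by (rule regrade_unregrade) (use g assms in blast)
  ultimately show "g \<in> regrade ` {f. (\<forall>\<nu>. \<nu> \<noteq> \<mu> \<longrightarrow> f \<nu> = 0) \<and> f \<mu> \<in> A}"
    by (intro image_eqI[where x = "unregrade g"]) simp_all
qed

end

section \<open>Changing the automorphism tuple by an invertible integer matrix\<close>

lemma matrix_vector_mult_axis_nth: "((A::'a::comm_ring_1^'n::finite^'m) *v axis i 1) $ j = A $ j $ i"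
  by (simp add: matrix_vector_mult_def axis_def if_distrib if_distribR cong: if_cong)

locale multiloop_base_change = vector_space sc
  for sc :: "'k::field \<Rightarrow> 'g::ab_group_add \<Rightarrow> 'g" +
  fixes \<sigma> :: "'n::finite \<Rightarrow> 'g \<Rightarrow> 'g" and m mt :: "'n \<Rightarrow> nat" and \<zeta> :: "nat \<Rightarrow> 'k"
    and P Q :: "int^'n^'n"
  assumes roots: "compatible_roots_of_unity \<zeta>"
    and commuting: "commuting_bijections \<sigma>"
    and sigma_scale: "\<And>i. commutes_scale sc (\<sigma> i)"
    and m_pos: "\<And>i. 0 < m i" and m_period: "\<And>i. \<sigma> i ^^ m i = id"
    and mt_pos: "\<And>j. 0 < mt j" and mt_period: "\<And>j. sigmaP \<sigma> P j ^^ mt j = id"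
    and PQ: "P ** Q = mat 1" and QP: "Q ** P = mat 1"
begin

definition K :: nat where "K = (\<Prod>i\<in>UNIV. m i) * (\<Prod>j\<in>UNIV. mt j)"

definition z :: 'k where "z = \<zeta> K"

lemma K_pos: "0 < K"
  unfolding K_def using m_pos mt_pos by (simp add: prod_pos)

lemma m_dvd_K: "m i dvd K"
  unfolding K_def by (simp add: dvd_prodI)

lemma mt_dvd_K: "mt j dvd K"
  unfolding K_def by (simp add: dvd_prodI)

lemma z_nonzero: "z \<noteq> 0"
  unfolding z_def by (rule compatible_root_nonzero[OF roots K_pos])

lemma z_powi_eq_1_iff: "z powi a = 1 \<longleftrightarrow> int K dvd a"
  unfolding z_def by (rule compatible_root_powi_eq_1_iff[OF roots K_pos])

lemma sigmaP_commuting: "commuting_bijections (sigmaP \<sigma> P)"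
  unfolding sigmaP_eq_multipow by (rule commuting_bijections_multipow[OF commuting])

lemma sigmaP_scale: "commutes_scale sc (sigmaP \<sigma> P j)"
  unfolding sigmaP_eq_multipow by (rule commutes_scale_multipow[OF commuting sigma_scale])

lemma joint_eigvec_sigmaP:
  assumes "joint_eigvec sc z \<sigma> e x" shows "joint_eigvec sc z (sigmaP \<sigma> P) (e v* P) x"
  unfolding joint_eigvec_def sigmaP_eq_multipow
  using joint_eigvec_multipow[OF commuting sigma_scale assms z_nonzero]
  by (simp add: vector_matrix_mult_def column_def mult.commute)

lemma sigma_eq_multipow_sigmaP: "\<sigma> i = multipow (sigmaP \<sigma> P) (Q *v axis i 1)"
proof -
  have "(\<Sum>j\<in>UNIV. w $ j *s column j P) = P *v w" for w
    by (simp add: vec_eq_iff column_def matrix_vector_mult_def mult.commute)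
  then have "multipow (sigmaP \<sigma> P) (Q *v axis i 1) = multipow \<sigma> (P *v (Q *v axis i 1))"
    unfolding sigmaP_eq_multipow by (simp add: multipow_multipow[OF commuting])
  also have "\<dots> = \<sigma> i"
    by (simp add: matrix_vector_mul_assoc PQ multipow_axis[OF commuting])
  finally show ?thesis by simp
qed

lemma joint_eigvec_sigma:
  assumes "joint_eigvec sc z (sigmaP \<sigma> P) w x" shows "joint_eigvec sc z \<sigma> (w v* Q) x"
  unfolding joint_eigvec_def
proof
  fix i
  have "\<sigma> i x = sc (z powi (\<Sum>j\<in>UNIV. w $ j * (Q *v axis i 1) $ j)) x"
    by (subst sigma_eq_multipow_sigmaP)
      (rule joint_eigvec_multipow[OF sigmaP_commuting sigmaP_scale assms z_nonzero])
  then show "\<sigma> i x = sc (z powi ((w v* Q) $ i)) x"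
    by (simp add: matrix_vector_mult_axis_nth vector_matrix_mult_def mult.commute)
qed

lemma joint_eigvec_base_change_iff:
  "joint_eigvec sc z \<sigma> e x \<longleftrightarrow> joint_eigvec sc z (sigmaP \<sigma> P) (e v* P) x"
  using joint_eigvec_sigmaP joint_eigvec_sigma[of "e v* P"]
  by (auto simp: vector_matrix_mul_assoc PQ)

lemma fixpts_sigmaP: "fixpts \<sigma> = fixpts (sigmaP \<sigma> P)"
proof -
  have "x \<in> fixpts \<tau> \<longleftrightarrow> joint_eigvec sc z \<tau> 0 x" for x and \<tau> :: "'n \<Rightarrow> 'g \<Rightarrow> 'g"
    by (simp add: fixpts_def joint_eigvec_def)
  then show ?thesis using joint_eigvec_base_change_iff[of 0] by auto
qed

lemma joint_eigvec_dvd: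
  assumes "joint_eigvec sc z \<tau> e x" "x \<noteq> 0" "commutes_scale sc (\<tau> i)" "\<tau> i ^^ n = id"
  shows "int K dvd int n * e $ i"
proof -
  have "z powi (e $ i * int n) = 1" by (rule joint_eigvec_period[OF assms])
  then show ?thesis unfolding z_powi_eq_1_iff by (metis mult.commute)
qed

definition exp_vec :: "('n \<Rightarrow> nat) \<Rightarrow> int^'n \<Rightarrow> int^'n" where
  "exp_vec ms lam = (\<chi> i. int (K div ms i) * lam $ i)"

definition deg_vec :: "('n \<Rightarrow> nat) \<Rightarrow> int^'n \<Rightarrow> int^'n" where
  "deg_vec ms e = (\<chi> i. int (ms i) * e $ i div int K)"

lemma gbar_eq_joint_eigvec:
  assumes "\<And>i. 0 < ms i" "\<And>i. ms i dvd K"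
  shows "gbar sc \<tau> ms \<zeta> lam = {x. joint_eigvec sc z \<tau> (exp_vec ms lam) x}"
  unfolding gbar_def joint_eigvec_def exp_vec_def z_def
  using compatible_root_powi[OF roots assms(1) assms(2) K_pos] by simp

lemma exp_vec_deg_vec:
  assumes "\<And>i. 0 < ms i" "\<And>i. ms i dvd K" "\<And>i. int K dvd int (ms i) * e $ i"
  shows "exp_vec ms (deg_vec ms e) = e"
  using cofactor_mult_div[OF assms] by (simp add: vec_eq_iff exp_vec_def deg_vec_def)

lemma deg_vec_exp_vec:
  assumes "\<And>i. ms i dvd K" shows "deg_vec ms (exp_vec ms lam) = lam"
proof -
  have "int (ms i) * (int (K div ms i) * lam $ i) div int K = lam $ i" for i
    unfolding cofactor_mult[OF assms] using K_pos by simp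
  then show ?thesis by (simp add: vec_eq_iff exp_vec_def deg_vec_def)
qed

lemma exp_vec_add: "exp_vec ms (a + b) = exp_vec ms a + exp_vec ms b"
  by (simp add: vec_eq_iff exp_vec_def algebra_simps)

text \<open>The exponent vector of \<open>lam\<close> with respect to \<open>\<sigma>\<^sup>P\<close>.\<close>
definition twist :: "int^'n \<Rightarrow> int^'n" where
  "twist lam = exp_vec m lam v* P"

definition admissible :: "(int^'n) set" where
  "admissible = {lam. \<forall>j. int K dvd int (mt j) * twist lam $ j}"

definition rho :: "int^'n \<Rightarrow> int^'n" where
  "rho lam = deg_vec mt (twist lam)"

lemma twist_add: "twist (a + b) = twist a + twist b"
  by (simp add: twist_def exp_vec_add vector_matrix_left_distrib)

lemma twist_zero: "twist 0 = 0"
proof -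
  have "exp_vec m 0 = 0" by (simp add: exp_vec_def vec_eq_iff)
  then show ?thesis by (simp add: twist_def)
qed

lemma twist_uminus: "twist (- a) = - twist a"
  using twist_add[of "- a" a] by (simp add: twist_zero eq_neg_iff_add_eq_0)

lemma exp_vec_rho: "lam \<in> admissible \<Longrightarrow> exp_vec mt (rho lam) = twist lam"
  unfolding rho_def admissible_def by (rule exp_vec_deg_vec[OF mt_pos mt_dvd_K]) simp

lemma gbar_rho:
  assumes "lam \<in> admissible" shows "gbar sc \<sigma> m \<zeta> lam = gbar sc (sigmaP \<sigma> P) mt \<zeta> (rho lam)"
  unfolding gbar_eq_joint_eigvec[OF m_pos m_dvd_K] gbar_eq_joint_eigvec[OF mt_pos mt_dvd_K]
    exp_vec_rho[OF assms] twist_def joint_eigvec_base_change_iff ..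

lemma admissible_if_gbar:
  assumes "x \<in> gbar sc \<sigma> m \<zeta> lam" "x \<noteq> 0" shows "lam \<in> admissible"
proof -
  have "joint_eigvec sc z (sigmaP \<sigma> P) (twist lam) x"
    using assms(1) by (simp add: gbar_eq_joint_eigvec[OF m_pos m_dvd_K] twist_def joint_eigvec_sigmaP)
  then have "int K dvd int (mt j) * twist lam $ j" for j
    by (rule joint_eigvec_dvd[OF _ assms(2) sigmaP_scale mt_period])
  then show ?thesis by (simp add: admissible_def)
qed

lemma gbar_sigmaP_in_image:
  assumes "x \<in> gbar sc (sigmaP \<sigma> P) mt \<zeta> \<nu>" "x \<noteq> 0" shows "\<nu> \<in> rho ` admissible"
proof -
  define u where "u = exp_vec mt \<nu> v* Q"
  have "joint_eigvec sc z \<sigma> u x"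
    using assms(1) by (simp add: u_def gbar_eq_joint_eigvec[OF mt_pos mt_dvd_K] joint_eigvec_sigma)
  then have "int K dvd int (m i) * u $ i" for i
    by (rule joint_eigvec_dvd[OF _ assms(2) sigma_scale m_period])
  then have exp_\<mu>: "exp_vec m (deg_vec m u) = u"
    by (rule exp_vec_deg_vec[OF m_pos m_dvd_K])
  have "twist (deg_vec m u) = u v* P" by (simp add: twist_def exp_\<mu>)
  also have "\<dots> = exp_vec mt \<nu>" by (simp add: u_def vector_matrix_mul_assoc QP)
  finally have twist_\<mu>: "twist (deg_vec m u) = exp_vec mt \<nu>" .
  have "deg_vec m u \<in> admissible"
    by (simp add: admissible_def twist_\<mu> exp_vec_def cofactor_mult[OF mt_dvd_K])
  moreover have "rho (deg_vec m u) = \<nu>"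
    by (simp add: rho_def twist_\<mu> deg_vec_exp_vec[OF mt_dvd_K])
  ultimately show ?thesis by blast
qed

lemma admissible_add: "a \<in> admissible \<Longrightarrow> b \<in> admissible \<Longrightarrow> a + b \<in> admissible"
  by (simp add: admissible_def twist_add distrib_left)

lemma admissible_uminus: "a \<in> admissible \<Longrightarrow> - a \<in> admissible"
  by (simp add: admissible_def twist_uminus)

lemma zero_admissible: "0 \<in> admissible"
  by (simp add: admissible_def twist_zero)

lemma rho_add:
  assumes "a \<in> admissible" "b \<in> admissible" shows "rho (a + b) = rho a + rho b"
proof -
  have "(int (mt j) * twist a $ j + int (mt j) * twist b $ j) div int K
      = int (mt j) * twist a $ j div int K + int (mt j) * twist b $ j div int K" for j
    using assms by (intro div_plus_div_distrib_dvd_left) (simp add: admissible_def)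
  then show ?thesis by (simp add: rho_def deg_vec_def vec_eq_iff twist_add distrib_left)
qed

lemma inj_on_rho: "inj_on rho admissible"
proof
  fix a b assume "a \<in> admissible" "b \<in> admissible" "rho a = rho b"
  then have "twist a = twist b" using exp_vec_rho by metis
  then have "exp_vec m a v* P = exp_vec m b v* P" by (simp add: twist_def)
  then have "(exp_vec m a v* P) v* Q = (exp_vec m b v* P) v* Q" by (rule arg_cong)
  then have "exp_vec m a = exp_vec m b" by (simp add: vector_matrix_mul_assoc PQ)
  then have "deg_vec m (exp_vec m a) = deg_vec m (exp_vec m b)" by simp
  then show "a = b" by (simp add: deg_vec_exp_vec[OF m_dvd_K])
qed

end

lemma (in module) span_nonzero_element:
  assumes "v \<in> span A" "v \<noteq> 0" shows "\<exists>a\<in>A. a \<noteq> 0"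
proof (rule ccontr)
  assume "\<not> (\<exists>a\<in>A. a \<noteq> 0)"
  then have "span A \<subseteq> {0}" by (intro span_minimal) auto
  then show False using assms by auto
qed

section \<open>The regraded multiloop algebra\<close>

locale multiloop_regrading = multiloop_base_change sc \<sigma> m mt \<zeta> P Q
  for sc :: "'k::field \<Rightarrow> 'g::ab_group_add \<Rightarrow> 'g" and \<sigma> :: "'n::finite \<Rightarrow> 'g \<Rightarrow> 'g"
    and m mt \<zeta> P Q +
  fixes br :: "'g \<Rightarrow> 'g \<Rightarrow> 'g" and H :: "'g set"
  assumes br_zero: "\<And>x. br x 0 = 0"
begin

abbreviation loop :: "(int^'n \<Rightarrow> 'g) set" where
  "loop \<equiv> multiloop sc br \<sigma> m \<zeta> H"

abbreviation loopP :: "(int^'n \<Rightarrow> 'g) set" where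
  "loopP \<equiv> multiloop sc br (sigmaP \<sigma> P) mt \<zeta> H"

abbreviation grades :: "(int^'n) set" where
  "grades \<equiv> zgen (supp_Zn loop)"

abbreviation homogeneous_span :: "('n \<Rightarrow> 'g \<Rightarrow> 'g) \<Rightarrow> ('n \<Rightarrow> nat) \<Rightarrow> int^'n \<Rightarrow> 'g set" where
  "homogeneous_span \<tau> ms lam \<equiv> span (\<Union>\<alpha>\<in>Qroot sc br H. wspace sc br H \<alpha> \<inter> gbar sc \<tau> ms \<zeta> lam)"

lemma single_in_loop:
  assumes "\<alpha> \<in> Qroot sc br H" "y \<in> wspace sc br H \<alpha> \<inter> gbar sc \<sigma> m \<zeta> \<mu>"
  shows "(\<lambda>\<nu>. if \<nu> = \<mu> then y else 0) \<in> loop"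
proof -
  have "finite {\<nu>. (if \<nu> = \<mu> then y else 0) \<noteq> 0}"
    by (rule finite_subset[of _ "{\<mu>}"]) auto
  then show ?thesis using assms by (auto simp: multiloop_def span_zero intro: span_base)
qed

lemma support_loop: "f \<in> loop \<Longrightarrow> {\<mu>. f \<mu> \<noteq> 0} \<subseteq> grades"
  by (auto simp: supp_Zn_def intro: zgen.zg_gen)

lemma grades_subset_admissible: "grades \<subseteq> admissible"
proof (rule zgen_subset)
  show "supp_Zn loop \<subseteq> admissible"
  proof
    fix lam assume "lam \<in> supp_Zn loop"
    then obtain f where "f \<in> loop" "f lam \<noteq> 0" by (auto simp: supp_Zn_def)
    then obtain y where "y \<in> gbar sc \<sigma> m \<zeta> lam" "y \<noteq> 0"
      using span_nonzero_element by (fastforce simp: multiloop_def)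
    then show "lam \<in> admissible" by (rule admissible_if_gbar)
  qed
qed (use zero_admissible admissible_add admissible_uminus in auto)

lemma weight_vector_sigmaP_in_image:
  assumes "\<alpha> \<in> Qroot sc br H" "y \<in> wspace sc br H \<alpha> \<inter> gbar sc (sigmaP \<sigma> P) mt \<zeta> \<nu>" "y \<noteq> 0"
  shows "\<nu> \<in> rho ` grades"
proof -
  obtain \<mu> where \<mu>: "\<mu> \<in> admissible" "\<nu> = rho \<mu>"
    using gbar_sigmaP_in_image assms(2,3) by blast
  then have "y \<in> wspace sc br H \<alpha> \<inter> gbar sc \<sigma> m \<zeta> \<mu>" using assms(2) gbar_rho by simp
  then have "(\<lambda>\<nu>'. if \<nu>' = \<mu> then y else 0) \<in> loop" by (rule single_in_loop[OF assms(1)])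
  then have "\<mu> \<in> supp_Zn loop" using assms(3) unfolding supp_Zn_def by (intro CollectI bexI) auto
  then show ?thesis using \<mu>(2) zgen.zg_gen by blast
qed

lemma support_loopP: "g \<in> loopP \<Longrightarrow> {\<nu>. g \<nu> \<noteq> 0} \<subseteq> rho ` grades"
  using span_nonzero_element weight_vector_sigmaP_in_image by (fastforce simp: multiloop_def)

lemma gbar_rho_grades: "\<mu> \<in> grades \<Longrightarrow> gbar sc \<sigma> m \<zeta> \<mu> = gbar sc (sigmaP \<sigma> P) mt \<zeta> (rho \<mu>)"
  using grades_subset_admissible gbar_rho by auto

sublocale regrading grades rho
proof
  show "inj_on rho grades" using inj_on_rho grades_subset_admissible by (rule inj_on_subset)
qed (use rho_add grades_subset_admissible zgen_diff zgen.zg_add in auto)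

lemma regrade_in_loopP:
  assumes "f \<in> loop" shows "regrade f \<in> loopP"
proof -
  have "finite {\<nu>. regrade f \<nu> \<noteq> 0}"
    using assms support_regrade[OF support_loop[OF assms]] by (simp add: multiloop_def)
  moreover have "regrade f \<nu> \<in> homogeneous_span (sigmaP \<sigma> P) mt \<nu>" for \<nu>
  proof (cases "\<nu> \<in> rho ` grades")
    case True
    then obtain \<mu> where \<mu>: "\<mu> \<in> grades" "\<nu> = rho \<mu>" by blast
    have "f \<mu> \<in> homogeneous_span \<sigma> m \<mu>" using assms by (simp add: multiloop_def)
    then show ?thesis using \<mu> gbar_rho_grades by simp
  qed (simp add: regrade_outside span_zero)
  ultimately show ?thesis by (simp add: multiloop_def)
qed

lemma unregrade_in_loop:
  assumes "g \<in> loopP" shows "unregrade g \<in> loop"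
proof -
  have "finite {\<mu>. unregrade g \<mu> \<noteq> 0}"
    using assms by (intro finite_support_unregrade) (simp add: multiloop_def)
  moreover have "unregrade g \<mu> \<in> homogeneous_span \<sigma> m \<mu>" for \<mu>
  proof (cases "\<mu> \<in> grades")
    case True
    have "g (rho \<mu>) \<in> homogeneous_span (sigmaP \<sigma> P) mt (rho \<mu>)" using assms by (simp add: multiloop_def)
    then show ?thesis using True gbar_rho_grades by (simp add: unregrade_def)
  qed (simp add: unregrade_def span_zero)
  ultimately show ?thesis by (simp add: multiloop_def)
qed

lemma lie_iso_regrade: "lie_iso_between sc br loop loopP regrade"
  unfolding lie_iso_between_def
proof (intro conjI ballI allI)
  show "bij_betw regrade loop loopP"
    by (rule bij_betw_byWitness[where f' = unregrade])
      (auto simp: regrade_in_loopP unregrade_in_loop unregrade_regrade[OF support_loop]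
        regrade_unregrade[OF support_loopP])
  show "regrade (ladd f g) = ladd (regrade f) (regrade g)" for f g
    by (rule regrade_ladd)
  show "regrade (lsc sc c f) = lsc sc c (regrade f)" for c f
    by (simp add: regrade_lsc)
  show "regrade (lbr br f g) = lbr br (regrade f) (regrade g)" if "f \<in> loop" for f g
    using br_zero support_loop[OF that] by (rule regrade_lbr)
qed

lemma regrade_component:
  assumes "\<alpha> \<in> Qroot sc br H"
  shows "regrade ` regraded_comp (mlcomp sc br \<sigma> m \<zeta> H \<alpha>) grades rho lam
    = mlcomp sc br (sigmaP \<sigma> P) mt \<zeta> H \<alpha> lam"
proof (cases "lam \<in> rho ` grades")
  case True
  then obtain \<mu> where \<mu>: "\<mu> \<in> grades" "lam = rho \<mu>" by blast
  then have comp: "regraded_comp (mlcomp sc br \<sigma> m \<zeta> H \<alpha>) grades rho lam = mlcomp sc br \<sigma> m \<zeta> H \<alpha> \<mu>"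
    using True by (simp add: regraded_comp_def the_inv_into_f_f[OF hom_inj])
  have "gbar sc \<sigma> m \<zeta> \<mu> = gbar sc (sigmaP \<sigma> P) mt \<zeta> lam"
    using \<mu> gbar_rho_grades by simp
  then show ?thesis unfolding comp mlcomp_def
    by (simp only: \<mu>(2) regrade_image_single[OF \<mu>(1)])
next
  case False
  have "0 \<in> gbar sc (sigmaP \<sigma> P) mt \<zeta> lam"
    using sigmaP_scale by (simp add: gbar_def commutes_scale_def) (metis scale_zero_left)
  then have "mlcomp sc br (sigmaP \<sigma> P) mt \<zeta> H \<alpha> lam = {\<lambda>_. 0}"
    using weight_vector_sigmaP_in_image[OF assms _ _] False br_zero
    by (fastforce simp: mlcomp_def wspace_def)
  moreover have "regrade (\<lambda>_. 0) = (\<lambda>_. 0)" by (simp add: fun_eq_iff regrade_def)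
  ultimately show ?thesis using False by (simp add: regraded_comp_def)
qed

end

theorem lemma4p2p3:
  fixes sc :: "'k::field_char_0 \<Rightarrow> 'g::ab_group_add \<Rightarrow> 'g"
    and br :: "'g \<Rightarrow> 'g \<Rightarrow> 'g"
    and \<sigma> :: "'n::finite \<Rightarrow> 'g \<Rightarrow> 'g"
    and m mt :: "'n \<Rightarrow> nat"
    and \<zeta> :: "nat \<Rightarrow> 'k"
    and H :: "'g set"
    and P :: "int^'n^'n"
  assumes "alg_closed_field TYPE('k)"
    and "compatible_roots_of_unity \<zeta>"
    and "simple_lie sc br"
    and "\<forall>i. lie_aut sc br (\<sigma> i)"
    and "\<forall>i j. \<sigma> i \<circ> \<sigma> j = \<sigma> j \<circ> \<sigma> i"
    and "\<forall>i. 0 < m i"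
    and "\<forall>i. \<sigma> i ^^ m i = id"
    and "cartan_subalg sc br (fixpts \<sigma>) H"
    and "invertible P"
    and "\<forall>j. 0 < mt j"
    and "\<forall>j. sigmaP \<sigma> P j ^^ mt j = id"
  shows "fixpts \<sigma> = fixpts (sigmaP \<sigma> P) \<and>
    (\<exists>\<rho>. group_mono_on (zgen (supp_Zn (multiloop sc br \<sigma> m \<zeta> H))) \<rho> \<and>
      (\<exists>\<phi>. lie_iso_between sc br (multiloop sc br \<sigma> m \<zeta> H) (multiloop sc br (sigmaP \<sigma> P) mt \<zeta> H) \<phi> \<and>
        (\<forall>\<alpha>\<in>Qroot sc br H. \<forall>lam.
           \<phi> ` regraded_comp (mlcomp sc br \<sigma> m \<zeta> H \<alpha>) (zgen (supp_Zn (multiloop sc br \<sigma> m \<zeta> H))) \<rho> lam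
           = mlcomp sc br (sigmaP \<sigma> P) mt \<zeta> H \<alpha> lam)))"
proof -
  have lie: "lie_algebra sc br" using assms(3) by (simp add: simple_lie_def)
  have br_zero: "br x 0 = 0" for x
    using lie module_hom.zero module_hom_linearI by (metis lie_algebra_def)
  have "commutes_scale sc (\<sigma> i)" for i
    using assms(4) module_hom.scale module_hom_linearI unfolding commutes_scale_def lie_aut_def by metis
  moreover have "commuting_bijections \<sigma>"
    using assms(4,5) by (simp add: commuting_bijections_def lie_aut_def)
  moreover obtain Q where "P ** Q = mat 1" "Q ** P = mat 1"
    using assms(9) by (auto simp: invertible_def)
  ultimately interpret multiloop_regrading sc \<sigma> m mt \<zeta> P Q br H
    using lie br_zero assms(2,6,7,10,11)
    by unfold_locales (auto simp: lie_algebra_def vector_space_def)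
  show ?thesis
  proof (intro conjI exI)
    show "fixpts \<sigma> = fixpts (sigmaP \<sigma> P)" by (rule fixpts_sigmaP)
    show "group_mono_on grades rho" unfolding group_mono_on_def using hom_add hom_inj by blast
    show "lie_iso_between sc br loop loopP regrade" by (rule lie_iso_regrade)
    show "\<forall>\<alpha>\<in>Qroot sc br H. \<forall>lam. regrade ` regraded_comp (mlcomp sc br \<sigma> m \<zeta> H \<alpha>) grades rho lam
        = mlcomp sc br (sigmaP \<sigma> P) mt \<zeta> H \<alpha> lam"
      using regrade_component by blast
  qed
qed

end
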